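(* Let $p\geq 1$ be fixed and define $\phi_p:\mathbb{R}\to[0,\infty)$ by $\phi_p(t)=|t|$ if $|t|\leq 1$ and $\phi_p(t)=|t|^p$ otherwise. Then: (i) $\mathscr{P}_p(\mathbb{R})=\mathcal{M}_1^{\phi_p}\;(=\mathcal{M}_1^p)$; (ii) $\mathsf{d}_{\phi_p}(P,Q)\leq \sqrt{\mathsf{d}_{FM,p}(P,Q)}+p\,\mathsf{d}_{FM,p}(P,Q)$ for all $P,Q\in\mathscr{P}_p(\mathbb{R})$; (iii) $\mathsf{d}_{FM,p}$ metrizes the $\phi_p$-weak topology on $\mathscr{P}_p(\mathbb{R})$.
   Context: $\mathscr{P}(\mathbb{R})$ is the set of Borel probability measures on $\mathbb{R}$; for $P\in\mathscr{P}(\mathbb{R})$ write also $P(x)=P((-\infty,x])$. For $p\geq 1$ let $c_p(\xi,\tilde\xi)=\max\{1,|\xi|,|\tilde\xi|\}^{p-1}$ and let $\mathcal{F}_p(\mathbb{R})$ be the set of functions $\psi:\mathbb{R}\to\mathbb{R}$ with $|\psi(\xi)-\psi(\tilde\xi)|\leq c_p(\xi,\tilde\xi)|\xi-\tilde\xi|$ for all $\xi,\tilde\xi\in\mathbb{R}$. The $p$-th order Fortet–Mourier metric is $\mathsf{d}_{FM,p}(P,Q)=\sup_{\psi\in\mathcal{F}_p(\mathbb{R})}\left|\int\psi\,dP-\int\psi\,dQ\right|$ (possibly $+\infty$), and $\mathscr{P}_p(\mathbb{R})=\{P\in\mathscr{P}(\mathbb{R}):\mathsf{d}_{FM,p}(P,\delta_0)<+\infty\}$,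 where $\delta_0$ is the Dirac measure at $0$. For a continuous $\phi:\mathbb{R}\to[0,\infty)$, $\mathcal{M}_1^\phi=\{P\in\mathscr{P}(\mathbb{R}):\int\phi\,dP<\infty\}$ and $\mathcal{M}_1^p=\mathcal{M}_1^{|\cdot|^p}$. For a gauge function $\phi$ (continuous, $\phi\geq1$ outside a compact set), the $\phi$-weak topology on $\mathcal{M}_1^\phi$ is the coarsest topology making $P\mapsto\int h\,dP$ continuous for every continuous $h$ with $|h(t)|\leq c(\phi(t)+1)$ for some constant $c>0$. The metric $\mathsf{d}_\phi$ on $\mathcal{M}_1^\phi$ is $\mathsf{d}_\phi(P,Q)=\mathsf{d}_{\mathrm{Prok}}(P,Q)+\left|\int\phi\,dP-\int\phi\,dQ\right|$, where $\mathsf{d}_{\mathrm{Prok}}(P,Q)=\inf\{\epsilon>0: P(A)\leq Q(A^\epsilon)+\epsilon\ \forall A\in\mathcal{B}(\mathbb{R})\}$ is the Prokhorov metric, with $A^\epsilon$ the open $\epsilon$-neighbourhood of $A$. *)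

theory Defs
  imports "HOL-Analysis.Analysis" "HOL-Probability.Probability"
begin

definition prob_real :: "real measure \<Rightarrow> bool" where
  "prob_real P \<longleftrightarrow> prob_space P \<and> sets P = sets borel"

definition cp :: "real \<Rightarrow> real \<Rightarrow> real \<Rightarrow> real" where
  "cp p x y = (max 1 (max \<bar>x\<bar> \<bar>y\<bar>)) powr (p - 1)"

definition Fp :: "real \<Rightarrow> (real \<Rightarrow> real) set" where
  "Fp p = {\<psi>. \<forall>x y. \<bar>\<psi> x - \<psi> y\<bar> \<le> cp p x y * \<bar>x - y\<bar>}"

text \<open>Fortet--Mourier metric, valued in the extended reals. Convention: a test function
  that is not integrable with respect to P or Q contributes the value infinity.\<close>
definition dFM :: "real \<Rightarrow> real measure \<Rightarrow> real measure \<Rightarrow> ereal" where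
  "dFM p P Q = (SUP \<psi>\<in>Fp p.
      (if integrable P \<psi> \<and> integrable Q \<psi>
       then ereal \<bar>(\<integral>x. \<psi> x \<partial>P) - (\<integral>x. \<psi> x \<partial>Q)\<bar> else \<infinity>))"

definition Pp :: "real \<Rightarrow> real measure set" where
  "Pp p = {P. prob_real P \<and> dFM p P (return borel 0) < \<infinity>}"

definition M1 :: "(real \<Rightarrow> real) \<Rightarrow> real measure set" where
  "M1 \<phi> = {P. prob_real P \<and> (\<integral>\<^sup>+x. ennreal (\<phi> x) \<partial>P) < \<infinity>}"

definition phip :: "real \<Rightarrow> real \<Rightarrow> real" where
  "phip p t = (if \<bar>t\<bar> \<le> 1 then \<bar>t\<bar> else \<bar>t\<bar> powr p)"

definition nbhd :: "real set \<Rightarrow> real \<Rightarrow> real set" where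
  "nbhd A \<epsilon> = {x. \<exists>a\<in>A. dist x a < \<epsilon>}"

definition dProk :: "real measure \<Rightarrow> real measure \<Rightarrow> real" where
  "dProk P Q = Inf {\<epsilon>. \<epsilon> > 0 \<and> (\<forall>A\<in>sets borel. measure P A \<le> measure Q (nbhd A \<epsilon>) + \<epsilon>)}"

definition dphi :: "(real \<Rightarrow> real) \<Rightarrow> real measure \<Rightarrow> real measure \<Rightarrow> real" where
  "dphi \<phi> P Q = dProk P Q + \<bar>(\<integral>x. \<phi> x \<partial>P) - (\<integral>x. \<phi> x \<partial>Q)\<bar>"

definition phi_weak_topology :: "(real \<Rightarrow> real) \<Rightarrow> real measure topology" where
  "phi_weak_topology \<phi> = topology_generated_by
     {{P \<in> M1 \<phi>. (\<integral>x. h x \<partial>P) \<in> V} | h V.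
        continuous_on UNIV h \<and> (\<exists>c>0. \<forall>t. \<bar>h t\<bar> \<le> c * (\<phi> t + 1)) \<and> open V}"

end

theory Submission
  imports Defs
begin

(*
  Every test function psi in Fp p satisfies |psi x - psi 0| <= phip p x, and phip p / p is itself a
  test function. Hence dFM is finite exactly on M1 (phip p), and the phip-moments of P and Q differ
  by at most p * dFM. Testing with the 1-Lipschitz function max 0 (e - infdist x A) gives
  P(A) <= Q(A^e) + dFM / e, so choosing e slightly above sqrt dFM bounds the Prokhorov distance;
  for dFM = 0 the same bound shows that P and Q have the same distribution function.

  For the topology, an integrand of growth at most c (phip + 1) is split into a tail, controlled by
  the integral of the tail weight max 0 (phip - R), and a part on [-2R, 2R] that is interpolated by
  tent functions on a fine grid. Tent functions and the tail weight are Lipschitz (in the weighted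
  sense of Fp), so their integrals are dFM-continuous; conversely, since all members of Fp share a
  Lipschitz constant on [-2R-1, 2R+1], finitely many such integrals control dFM.
*)

section \<open>The gauge and the test functions\<close>

lemma cp_ge_1: "p \<ge> 1 \<Longrightarrow> 1 \<le> cp p x y"
  unfolding cp_def by (rule ge_one_powr_ge_zero) auto

lemma cp_le_powr:
  assumes "p \<ge> 1" "1 \<le> B" "\<bar>x\<bar> \<le> B" "\<bar>y\<bar> \<le> B"
  shows "cp p x y \<le> B powr (p - 1)"
  unfolding cp_def by (rule powr_mono2) (use assms in auto)

lemma FpD: "\<psi> \<in> Fp p \<Longrightarrow> \<bar>\<psi> x - \<psi> y\<bar> \<le> cp p x y * \<bar>x - y\<bar>"
  unfolding Fp_def by blast

lemma scaled_in_Fp: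
  assumes "L > 0" "\<And>x y. \<bar>f x - f y\<bar> \<le> L * cp p x y * \<bar>x - y\<bar>"
  shows "(\<lambda>x. f x / L) \<in> Fp p"
  unfolding Fp_def
proof safe
  fix x y
  have "\<bar>f x / L - f y / L\<bar> = \<bar>f x - f y\<bar> / L"
    using assms(1) by (simp add: diff_divide_distrib[symmetric])
  also have "\<dots> \<le> cp p x y * \<bar>x - y\<bar>"
    using assms by (simp add: divide_le_eq mult.commute mult.left_commute)
  finally show "\<bar>f x / L - f y / L\<bar> \<le> cp p x y * \<bar>x - y\<bar>" .
qed

lemma Fp_lipschitz_on_cball:
  assumes "p \<ge> 1" "1 \<le> B" "\<psi> \<in> Fp p"
  shows "(B powr (p - 1))-lipschitz_on (cball 0 B) \<psi>"
proof (rule lipschitz_onI)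
  fix x y :: real
  assume "x \<in> cball 0 B" "y \<in> cball 0 B"
  then have "cp p x y \<le> B powr (p - 1)"
    using assms by (intro cp_le_powr) auto
  then show "dist (\<psi> x) (\<psi> y) \<le> B powr (p - 1) * dist x y"
    using FpD[OF assms(3), of x y] unfolding dist_real_def
    by (meson abs_ge_zero mult_right_mono order_trans)
qed simp

lemma Fp_continuous:
  assumes "p \<ge> 1" "\<psi> \<in> Fp p"
  shows "continuous_on UNIV \<psi>"
proof (rule continuous_at_imp_continuous_on, intro ballI)
  fix x :: real
  have "continuous_on (cball 0 (\<bar>x\<bar> + 1)) \<psi>"
    by (rule lipschitz_on_continuous_on[OF Fp_lipschitz_on_cball[OF assms(1) _ assms(2)]]) simp
  moreover have "x \<in> interior (cball 0 (\<bar>x\<bar> + 1))" by simp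
  ultimately show "isCont \<psi> x" by (rule continuous_on_interior)
qed

lemma phip_eq_max:
  assumes "p \<ge> 1"
  shows "phip p t = max \<bar>t\<bar> (\<bar>t\<bar> powr p)"
proof (cases "\<bar>t\<bar> \<le> 1")
  case True
  then have "\<bar>t\<bar> powr p \<le> \<bar>t\<bar> powr 1" using assms by (intro powr_mono') auto
  then show ?thesis using True by (simp add: phip_def)
next
  case False
  then have "\<bar>t\<bar> powr 1 \<le> \<bar>t\<bar> powr p" using assms by (intro powr_mono) auto
  then show ?thesis using False by (simp add: phip_def)
qed

lemma phip_nonneg: "0 \<le> phip p t"
  unfolding phip_def by auto

lemma phip_le_powr_plus_1: "phip p t \<le> \<bar>t\<bar> powr p + 1"
  by (cases "\<bar>t\<bar> \<le> 1") (simp_all add: phip_def add_increasing)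

lemma powr_le_phip_plus_1: "p \<ge> 1 \<Longrightarrow> \<bar>t\<bar> powr p \<le> phip p t + 1"
  by (simp add: phip_eq_max)

lemma abs_le_phip: "p \<ge> 1 \<Longrightarrow> \<bar>t\<bar> \<le> phip p t"
  by (simp add: phip_eq_max)

lemma phip_continuous:
  assumes "p \<ge> 1"
  shows "continuous_on UNIV (phip p)"
proof -
  have "continuous_on UNIV (\<lambda>t. max \<bar>t\<bar> (\<bar>t\<bar> powr p))"
    using assms by (intro continuous_intros continuous_on_powr') auto
  then show ?thesis by (simp add: phip_eq_max[OF assms])
qed

lemma powr_diff_le:
  fixes a b p :: real
  assumes "p \<ge> 1" "0 \<le> a" "a \<le> b"
  shows "b powr p - a powr p \<le> p * b powr (p - 1) * (b - a)"
proof (cases "a = 0")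
  case True
  have "b powr p = b powr (p - 1) * b"
    using powr_add[of b "p - 1" 1] \<open>a \<le> b\<close> True by simp
  then show ?thesis
    using True mult_right_mono[OF assms(1), of "b powr (p - 1) * b"] assms
    by (simp add: mult.assoc)
next
  case False
  show ?thesis
  proof (cases "a = b")
    case False
    with \<open>a \<noteq> 0\<close> assms have "0 < a" "a < b" by auto
    then obtain z where z: "a < z" "z < b" "b powr p - a powr p = (b - a) * (p * z powr (p - 1))"
      using MVT2[of a b "\<lambda>z. z powr p" "\<lambda>z. p * z powr (p - 1)"] has_real_derivative_powr
      by force
    have "z powr (p - 1) \<le> b powr (p - 1)"
      by (rule powr_mono2) (use z assms in auto)
    then have "(b - a) * (p * z powr (p - 1)) \<le> (b - a) * (p * b powr (p - 1))"
      using z assms by (intro mult_left_mono) auto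
    then show ?thesis
      using z by (simp add: algebra_simps)
  qed simp
qed

lemma phip_lipschitz:
  assumes "p \<ge> 1"
  shows "\<bar>phip p x - phip p y\<bar> \<le> p * cp p x y * \<bar>x - y\<bar>"
proof -
  define m where "m = max \<bar>x\<bar> \<bar>y\<bar>"
  have cp: "1 \<le> p * cp p x y" "m powr (p - 1) \<le> cp p x y"
    using assms cp_ge_1[OF assms] mult_mono[of 1 p 1 "cp p x y"]
    by (auto simp: cp_def m_def intro: powr_mono2)
  have "\<bar>\<bar>x\<bar> powr p - \<bar>y\<bar> powr p\<bar> \<le> p * m powr (p - 1) * \<bar>\<bar>x\<bar> - \<bar>y\<bar>\<bar>"
  proof (cases "\<bar>x\<bar> \<le> \<bar>y\<bar>")
    case True
    then have "\<bar>x\<bar> powr p \<le> \<bar>y\<bar> powr p" using assms by (intro powr_mono2) auto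
    then show ?thesis using True powr_diff_le[OF assms, of "\<bar>x\<bar>" "\<bar>y\<bar>"] by (simp add: m_def)
  next
    case False
    then have "\<bar>y\<bar> powr p \<le> \<bar>x\<bar> powr p" using assms by (intro powr_mono2) auto
    then show ?thesis using False powr_diff_le[OF assms, of "\<bar>y\<bar>" "\<bar>x\<bar>"] by (simp add: m_def)
  qed
  also have "\<dots> \<le> p * cp p x y * \<bar>x - y\<bar>"
    using assms cp(2) cp_ge_1[OF assms, of x y] by (intro mult_mono) auto
  finally have pow: "\<bar>\<bar>x\<bar> powr p - \<bar>y\<bar> powr p\<bar> \<le> p * cp p x y * \<bar>x - y\<bar>" .
  have "1 * \<bar>x - y\<bar> \<le> p * cp p x y * \<bar>x - y\<bar>"
    by (rule mult_right_mono[OF cp(1)]) simp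
  then have abs: "\<bar>\<bar>x\<bar> - \<bar>y\<bar>\<bar> \<le> p * cp p x y * \<bar>x - y\<bar>"
    using abs_triangle_ineq3[of x y] by linarith
  have "\<bar>max a b - max c d\<bar> \<le> max \<bar>a - c\<bar> \<bar>b - d\<bar>" for a b c d :: real
    by (auto simp: max_def abs_le_iff)
  then show ?thesis
    unfolding phip_eq_max[OF assms] using pow abs by (meson max.boundedI order_trans)
qed

lemma phip_div_in_Fp: "p \<ge> 1 \<Longrightarrow> (\<lambda>t. phip p t / p) \<in> Fp p"
  by (rule scaled_in_Fp) (use phip_lipschitz in auto)

lemma Fp_abs_sub_le_phip:
  assumes "p \<ge> 1" "\<psi> \<in> Fp p"
  shows "\<bar>\<psi> x - \<psi> 0\<bar> \<le> phip p x"
proof -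
  have "\<bar>\<psi> x - \<psi> 0\<bar> \<le> cp p x 0 * \<bar>x\<bar>" using FpD[OF assms(2), of x 0] by simp
  also have "cp p x 0 * \<bar>x\<bar> = phip p x"
  proof (cases "\<bar>x\<bar> \<le> 1")
    case False
    then have "\<bar>x\<bar> powr (p - 1) * \<bar>x\<bar> = \<bar>x\<bar> powr p"
      using powr_add[of "\<bar>x\<bar>" "p - 1" 1] by simp
    then show ?thesis using False by (simp add: cp_def phip_def max_def)
  qed (simp add: cp_def phip_def max_def)
  finally show ?thesis .
qed

section \<open>Finite moments and the Fortet--Mourier distance\<close>

lemma M1D:
  assumes "P \<in> M1 \<phi>"
  shows "prob_space P" "sets P = sets borel" "(\<integral>\<^sup>+x. ennreal (\<phi> x) \<partial>P) < \<infinity>"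
  using assms by (auto simp: M1_def prob_real_def)

lemma M1_real_distribution: "P \<in> M1 \<phi> \<Longrightarrow> real_distribution P"
  unfolding real_distribution_def real_distribution_axioms_def using M1D by blast

lemma space_M1: "P \<in> M1 \<phi> \<Longrightarrow> space P = UNIV"
  using sets_eq_imp_space_eq[OF M1D(2)] by simp

lemma borel_measurable_M1:
  "P \<in> M1 \<phi> \<Longrightarrow> g \<in> borel_measurable borel \<Longrightarrow> g \<in> borel_measurable P"
  using measurable_cong_sets[OF M1D(2) refl] by blast

lemma continuous_measurable_M1:
  "P \<in> M1 \<phi> \<Longrightarrow> continuous_on UNIV g \<Longrightarrow> (g :: real \<Rightarrow> real) \<in> borel_measurable P"
  by (rule borel_measurable_M1[OF _ borel_measurable_continuous_onI])

lemma integrable_M1: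
  assumes "P \<in> M1 \<phi>" "\<And>t. 0 \<le> \<phi> t" "continuous_on UNIV \<phi>"
    and "continuous_on UNIV g" "\<And>t. \<bar>g t\<bar> \<le> c * (\<phi> t + 1)"
  shows "integrable P g"
proof -
  interpret prob_space P using M1D(1)[OF assms(1)] .
  have "integrable P \<phi>"
    unfolding integrable_iff_bounded
    using M1D(3)[OF assms(1)] assms(2) continuous_measurable_M1[OF assms(1,3)] by simp
  then have "integrable P (\<lambda>t. c * (\<phi> t + 1))" by auto
  then show ?thesis
    by (rule Bochner_Integration.integrable_bound)
      (use assms continuous_measurable_M1 in \<open>auto intro: order_trans[OF _ abs_ge_self]\<close>)
qed

lemma integrable_indicator_M1:
  assumes "P \<in> M1 \<phi>" "B \<in> sets borel"
  shows "integrable P (\<lambda>x. c * indicator B x :: real)"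
proof -
  interpret prob_space P using M1D(1)[OF assms(1)] .
  show ?thesis using assms M1D(2)[OF assms(1)]
    by (intro integrable_mult_right integrable_real_indicator) (auto simp: emeasure_finite less_top[symmetric])
qed

lemma integral_diff_const_M1:
  fixes f :: "real \<Rightarrow> real"
  assumes "P \<in> M1 \<phi>" "integrable P f"
  shows "(\<integral>x. f x - c \<partial>P) = (\<integral>x. f x \<partial>P) - c"
proof -
  interpret prob_space P using M1D(1)[OF assms(1)] .
  show ?thesis using assms(2) by (simp add: prob_space)
qed

lemma integrable_M1_phip:
  assumes "p \<ge> 1" "P \<in> M1 (phip p)" "continuous_on UNIV g" "\<And>t. \<bar>g t\<bar> \<le> c * (phip p t + 1)"
  shows "integrable P g"
  by (rule integrable_M1[OF assms(2) phip_nonneg phip_continuous[OF assms(1)] assms(3,4)])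

lemma integrable_phip:
  assumes "p \<ge> 1" "P \<in> M1 (phip p)"
  shows "integrable P (phip p)"
  by (rule integrable_M1_phip[OF assms phip_continuous[OF assms(1)], where c=1]) (simp add: phip_nonneg)

lemma Fp_integrable:
  assumes "p \<ge> 1" "P \<in> M1 (phip p)" "\<psi> \<in> Fp p"
  shows "integrable P \<psi>"
proof (rule integrable_M1_phip[OF assms(1,2) Fp_continuous[OF assms(1,3)]])
  fix t
  have "\<bar>\<psi> t\<bar> \<le> \<bar>\<psi> 0\<bar> + phip p t" using Fp_abs_sub_le_phip[OF assms(1,3), of t] by linarith
  also have "\<dots> \<le> (\<bar>\<psi> 0\<bar> + 1) * (phip p t + 1)"
    using phip_nonneg[of p t] by (simp add: algebra_simps)
  finally show "\<bar>\<psi> t\<bar> \<le> (\<bar>\<psi> 0\<bar> + 1) * (phip p t + 1)" .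
qed

lemma Fp_integral_sub_le:
  assumes "p \<ge> 1" "P \<in> M1 (phip p)" "\<psi> \<in> Fp p"
  shows "\<bar>(\<integral>x. \<psi> x \<partial>P) - \<psi> 0\<bar> \<le> (\<integral>x. phip p x \<partial>P)"
proof -
  interpret prob_space P using M1D(1)[OF assms(2)] .
  have "(\<integral>x. \<psi> x \<partial>P) - \<psi> 0 = (\<integral>x. \<psi> x - \<psi> 0 \<partial>P)"
    using integral_diff_const_M1[OF assms(2) Fp_integrable[OF assms]] by simp
  also have "\<bar>\<dots>\<bar> \<le> (\<integral>x. phip p x \<partial>P)"
    using Fp_integrable[OF assms] Fp_abs_sub_le_phip[OF assms(1,3)] integrable_phip[OF assms(1,2)]
    by (intro integral_abs_bound_integral) auto
  finally show ?thesis .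
qed

lemma zero_in_Fp: "(\<lambda>x. 0) \<in> Fp p"
  unfolding Fp_def cp_def by auto

lemma dFM_nonneg: "0 \<le> dFM p P Q"
  unfolding dFM_def by (rule SUP_upper2[OF zero_in_Fp]) auto

lemma dFM_commute: "dFM p P Q = dFM p Q P"
  unfolding dFM_def by (intro SUP_cong refl) (auto simp: abs_minus_commute)

lemma dFM_M1_eq_SUP:
  assumes "p \<ge> 1" "P \<in> M1 (phip p)" "Q \<in> M1 (phip p)"
  shows "dFM p P Q = (SUP \<psi>\<in>Fp p. ereal \<bar>(\<integral>x. \<psi> x \<partial>P) - (\<integral>x. \<psi> x \<partial>Q)\<bar>)"
  unfolding dFM_def using Fp_integrable[OF assms(1,2)] Fp_integrable[OF assms(1,3)]
  by (intro SUP_cong) auto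

abbreviation dFM_real :: "real \<Rightarrow> real measure \<Rightarrow> real measure \<Rightarrow> real" where
  "dFM_real p P Q \<equiv> real_of_ereal (dFM p P Q)"

lemma dFM_eq_ereal_dFM_real:
  assumes "p \<ge> 1" "P \<in> M1 (phip p)" "Q \<in> M1 (phip p)"
  shows "dFM p P Q = ereal (dFM_real p P Q)"
proof -
  have "dFM p P Q \<le> ereal ((\<integral>x. phip p x \<partial>P) + (\<integral>x. phip p x \<partial>Q))"
    unfolding dFM_M1_eq_SUP[OF assms]
  proof (rule SUP_least)
    fix \<psi> assume "\<psi> \<in> Fp p"
    then have "\<bar>(\<integral>x. \<psi> x \<partial>P) - (\<integral>x. \<psi> x \<partial>Q)\<bar> \<le> (\<integral>x. phip p x \<partial>P) + (\<integral>x. phip p x \<partial>Q)"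
      using Fp_integral_sub_le[OF assms(1,2)] Fp_integral_sub_le[OF assms(1,3)] by fastforce
    then show "ereal \<bar>(\<integral>x. \<psi> x \<partial>P) - (\<integral>x. \<psi> x \<partial>Q)\<bar>
        \<le> ereal ((\<integral>x. phip p x \<partial>P) + (\<integral>x. phip p x \<partial>Q))" by simp
  qed
  then show ?thesis using dFM_nonneg[of p P Q] by (cases "dFM p P Q") auto
qed

lemma dFM_M1_less_infinity:
  assumes "p \<ge> 1" "P \<in> M1 (phip p)" "Q \<in> M1 (phip p)"
  shows "dFM p P Q < \<infinity>"
  by (subst dFM_eq_ereal_dFM_real[OF assms]) simp

lemma dFM_real_upper:
  assumes "p \<ge> 1" "P \<in> M1 (phip p)" "Q \<in> M1 (phip p)" "\<psi> \<in> Fp p"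
  shows "\<bar>(\<integral>x. \<psi> x \<partial>P) - (\<integral>x. \<psi> x \<partial>Q)\<bar> \<le> dFM_real p P Q"
proof -
  have "ereal \<bar>(\<integral>x. \<psi> x \<partial>P) - (\<integral>x. \<psi> x \<partial>Q)\<bar> \<le> dFM p P Q"
    unfolding dFM_M1_eq_SUP[OF assms(1-3)] using assms(4) by (rule SUP_upper)
  then show ?thesis by (subst (asm) dFM_eq_ereal_dFM_real[OF assms(1-3)]) simp
qed

lemma dFM_real_least:
  assumes "p \<ge> 1" "P \<in> M1 (phip p)" "Q \<in> M1 (phip p)"
    and "\<And>\<psi>. \<psi> \<in> Fp p \<Longrightarrow> \<bar>(\<integral>x. \<psi> x \<partial>P) - (\<integral>x. \<psi> x \<partial>Q)\<bar> \<le> B"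
  shows "dFM_real p P Q \<le> B"
proof -
  have "dFM p P Q \<le> ereal B"
    unfolding dFM_M1_eq_SUP[OF assms(1-3)] using assms(4) by (intro SUP_least) simp
  then show ?thesis by (subst (asm) dFM_eq_ereal_dFM_real[OF assms(1-3)]) simp
qed

lemma integral_diff_le_dFM_real:
  assumes "p \<ge> 1" "P \<in> M1 (phip p)" "Q \<in> M1 (phip p)" "L > 0"
    and "\<And>x y. \<bar>f x - f y\<bar> \<le> L * cp p x y * \<bar>x - y\<bar>"
  shows "\<bar>(\<integral>x. f x \<partial>P) - (\<integral>x. f x \<partial>Q)\<bar> \<le> L * dFM_real p P Q"
proof -
  have "\<bar>(\<integral>x. f x \<partial>P) / L - (\<integral>x. f x \<partial>Q) / L\<bar> \<le> dFM_real p P Q"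
    using dFM_real_upper[OF assms(1-3) scaled_in_Fp[OF assms(4,5)]] by simp
  then show ?thesis
    using assms(4) by (simp add: diff_divide_distrib[symmetric] divide_le_eq mult.commute)
qed

lemma lipschitz_integral_diff_le_dFM_real:
  assumes "p \<ge> 1" "P \<in> M1 (phip p)" "Q \<in> M1 (phip p)" "L > 0"
    and "\<And>x y. \<bar>f x - f y\<bar> \<le> L * \<bar>x - y\<bar>"
  shows "\<bar>(\<integral>x. f x \<partial>P) - (\<integral>x. f x \<partial>Q)\<bar> \<le> L * dFM_real p P Q"
proof (rule integral_diff_le_dFM_real[OF assms(1-4)])
  fix x y
  have "L * \<bar>x - y\<bar> * 1 \<le> L * \<bar>x - y\<bar> * cp p x y"
    using assms(4) by (intro mult_left_mono cp_ge_1[OF assms(1)]) auto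
  then show "\<bar>f x - f y\<bar> \<le> L * cp p x y * \<bar>x - y\<bar>"
    using assms(5)[of x y] by (simp add: ac_simps)
qed

lemma return_0_in_M1: "p \<ge> 1 \<Longrightarrow> return borel 0 \<in> M1 (phip p)"
  using prob_space_return[of 0 borel]
    nn_integral_return[of 0 borel "\<lambda>x. ennreal (phip p x)"]
    borel_measurable_continuous_onI[OF phip_continuous]
  by (simp add: M1_def prob_real_def phip_def)

lemma M1_subset_Pp:
  assumes "p \<ge> 1"
  shows "M1 (phip p) \<subseteq> Pp p"
proof
  fix P assume P: "P \<in> M1 (phip p)"
  then show "P \<in> Pp p"
    using dFM_M1_less_infinity[OF assms P return_0_in_M1[OF assms]] by (simp add: Pp_def M1_def)
qed

lemma Pp_subset_M1:
  assumes "p \<ge> 1"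
  shows "Pp p \<subseteq> M1 (phip p)"
proof
  fix P assume P: "P \<in> Pp p"
  have "integrable P (\<lambda>t. phip p t / p)"
  proof (rule ccontr)
    assume "\<not> integrable P (\<lambda>t. phip p t / p)"
    then have "\<infinity> \<le> dFM p P (return borel 0)"
      unfolding dFM_def by (intro SUP_upper2[OF phip_div_in_Fp[OF assms]]) simp
    then show False using P by (simp add: Pp_def)
  qed
  then have "integrable P (\<lambda>t. p * (phip p t / p))" by (rule integrable_mult_right)
  then have "integrable P (phip p)" using assms by simp
  then show "P \<in> M1 (phip p)"
    using P phip_nonneg by (simp add: Pp_def M1_def integrable_iff_bounded)
qed

lemma Pp_eq_M1: "p \<ge> 1 \<Longrightarrow> Pp p = M1 (phip p)"
  using M1_subset_Pp Pp_subset_M1 by blast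

lemma M1_mono:
  assumes "\<And>t. 0 \<le> g t" "g \<in> borel_measurable borel" "\<And>t. f t \<le> g t + 1"
  shows "M1 g \<subseteq> M1 f"
proof
  fix P assume P: "P \<in> M1 g"
  interpret prob_space P using M1D(1)[OF P] .
  have "g \<in> borel_measurable P"
    by (rule borel_measurable_M1[OF P assms(2)])
  have "(\<integral>\<^sup>+x. ennreal (f x) \<partial>P) \<le> (\<integral>\<^sup>+x. ennreal (g x) + 1 \<partial>P)"
  proof (rule nn_integral_mono)
    fix x
    have "ennreal (f x) \<le> ennreal (g x + 1)" using assms(3) by (rule ennreal_leI)
    then show "ennreal (f x) \<le> ennreal (g x) + 1" using assms(1)[of x] by (simp add: ennreal_plus)
  qed
  also have "\<dots> = (\<integral>\<^sup>+x. ennreal (g x) \<partial>P) + 1"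
    using \<open>g \<in> borel_measurable P\<close> by (subst nn_integral_add) (auto simp: emeasure_space_1)
  also have "\<dots> < \<infinity>" using M1D(3)[OF P] by simp
  finally show "P \<in> M1 f" using P unfolding M1_def mem_Collect_eq by blast
qed

lemma M1_phip_eq_M1_powr:
  assumes "p \<ge> 1"
  shows "M1 (phip p) = M1 (\<lambda>t. \<bar>t\<bar> powr p)"
proof (rule equalityI)
  show "M1 (phip p) \<subseteq> M1 (\<lambda>t. \<bar>t\<bar> powr p)"
    by (rule M1_mono[OF phip_nonneg borel_measurable_continuous_onI[OF phip_continuous[OF assms]]])
      (rule powr_le_phip_plus_1[OF assms])
  have "(\<lambda>t. \<bar>t\<bar> powr p) \<in> borel_measurable borel" by measurable
  then show "M1 (\<lambda>t. \<bar>t\<bar> powr p) \<subseteq> M1 (phip p)"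
    by (rule M1_mono[OF powr_ge_zero _ phip_le_powr_plus_1])
qed

section \<open>Prokhorov bound and the metric\<close>

lemma open_nbhd: "open (nbhd A e)"
proof -
  have "nbhd A e = (\<Union>a\<in>A. ball a e)" by (auto simp: nbhd_def dist_commute)
  then show ?thesis by auto
qed

lemma indicator_le_infdist_tent:
  assumes "0 < e"
  shows "e * indicator A x \<le> max 0 (e - infdist x A)"
  by (cases "x \<in> A") (use assms in auto)

lemma infdist_tent_le_indicator_nbhd:
  assumes "A \<noteq> {}" "0 < e"
  shows "max 0 (e - infdist x A) \<le> e * indicator (nbhd A e) x"
proof (cases "infdist x A < e")
  case True
  then obtain a where "a \<in> A" "dist x a < e"
    using assms(1) by (auto simp: infdist_def cINF_less_iff)
  then have "x \<in> nbhd A e" by (auto simp: nbhd_def)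
  then show ?thesis using infdist_nonneg[of x A] assms(2) by simp
qed (use assms(2) in simp)

lemma measure_le_nbhd_plus_dFM_real:
  assumes p: "p \<ge> 1" and P: "P \<in> M1 (phip p)" and Q: "Q \<in> M1 (phip p)"
    and "A \<in> sets borel" "0 < e"
  shows "measure P A \<le> measure Q (nbhd A e) + dFM_real p P Q / e"
proof (cases "A = {}")
  case True
  then show ?thesis using dFM_nonneg[of p P Q] \<open>0 < e\<close> by (simp add: real_of_ereal_pos)
next
  case False
  define \<psi> where "\<psi> t = max 0 (e - infdist t A)" for t
  have lip: "\<bar>\<psi> x - \<psi> y\<bar> \<le> 1 * \<bar>x - y\<bar>" for x y
    using infdist_triangle_abs[of x A y] unfolding \<psi>_def dist_real_def
    by (auto simp: abs_le_iff max_def)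
  have cont: "continuous_on UNIV \<psi>"
    unfolding \<psi>_def by (intro continuous_intros continuous_on_infdist)
  have bound: "\<bar>\<psi> t\<bar> \<le> e * (phip p t + 1)" for t
  proof -
    have "\<bar>\<psi> t\<bar> \<le> e" using \<open>0 < e\<close> infdist_nonneg[of t A] by (simp add: \<psi>_def)
    also have "e \<le> e * (phip p t + 1)" using \<open>0 < e\<close> phip_nonneg[of p t] by (simp add: distrib_left)
    finally show ?thesis .
  qed
  have int: "integrable M \<psi>" if "M \<in> M1 (phip p)" for M
    by (rule integrable_M1_phip[OF p that cont bound])
  have "e * measure P A = (\<integral>x. e * indicator A x \<partial>P)"
    using space_M1[OF P] by simp
  also have "\<dots> \<le> (\<integral>x. \<psi> x \<partial>P)"
    unfolding \<psi>_def
    by (rule integral_mono[OF integrable_indicator_M1[OF P \<open>A \<in> sets borel\<close>] int[OF P, unfolded \<psi>_def]])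
      (rule indicator_le_infdist_tent[OF \<open>0 < e\<close>])
  also have "\<dots> \<le> (\<integral>x. \<psi> x \<partial>Q) + dFM_real p P Q"
    using lipschitz_integral_diff_le_dFM_real[OF p P Q, of 1, OF _ lip] by simp
  also have "(\<integral>x. \<psi> x \<partial>Q) \<le> (\<integral>x. e * indicator (nbhd A e) x \<partial>Q)"
    unfolding \<psi>_def
    using open_nbhd
    by (intro integral_mono[OF int[OF Q, unfolded \<psi>_def] integrable_indicator_M1[OF Q]]
        infdist_tent_le_indicator_nbhd[OF False \<open>0 < e\<close>]) simp
  also have "(\<integral>x. e * indicator (nbhd A e) x \<partial>Q) = e * measure Q (nbhd A e)"
    using space_M1[OF Q] by simp
  finally have "e * measure P A \<le> e * measure Q (nbhd A e) + dFM_real p P Q" by simp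
  then show ?thesis
    using \<open>0 < e\<close> by (simp add: field_simps)
qed

lemma dProk_le_sqrt_dFM_real:
  assumes "p \<ge> 1" "P \<in> M1 (phip p)" "Q \<in> M1 (phip p)"
  shows "dProk P Q \<le> sqrt (dFM_real p P Q)"
proof -
  define D where "D = dFM_real p P Q"
  have D: "0 \<le> D" using dFM_nonneg[of p P Q] by (simp add: D_def real_of_ereal_pos)
  define E where "E = {\<epsilon>. \<epsilon> > 0 \<and> (\<forall>A\<in>sets borel. measure P A \<le> measure Q (nbhd A \<epsilon>) + \<epsilon>)}"
  have "e \<in> E" if "sqrt D < e" for e
  proof -
    have "0 < e" using that D by (meson le_less_trans real_sqrt_ge_zero)
    have "sqrt D * sqrt D < e * e"
      using that D \<open>0 < e\<close> by (intro mult_strict_mono) auto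
    then have "D / e \<le> e" using D \<open>0 < e\<close> by (simp add: divide_le_eq)
    with \<open>0 < e\<close> show ?thesis
      using measure_le_nbhd_plus_dFM_real[OF assms] unfolding E_def D_def by force
  qed
  moreover have "bdd_below E" unfolding E_def by (rule bdd_belowI[of _ 0]) auto
  ultimately have "Inf E \<le> e" if "sqrt D < e" for e
    using that cInf_lower by blast
  then show ?thesis unfolding dProk_def E_def[symmetric] D_def[symmetric] by (rule dense_ge)
qed

lemma integral_phip_diff_le:
  assumes "p \<ge> 1" "P \<in> M1 (phip p)" "Q \<in> M1 (phip p)"
  shows "\<bar>(\<integral>x. phip p x \<partial>P) - (\<integral>x. phip p x \<partial>Q)\<bar> \<le> p * dFM_real p P Q"
  using assms by (intro integral_diff_le_dFM_real phip_lipschitz) auto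

lemma dphi_phip_le:
  assumes "p \<ge> 1" "P \<in> M1 (phip p)" "Q \<in> M1 (phip p)"
  shows "dphi (phip p) P Q \<le> sqrt (dFM_real p P Q) + p * dFM_real p P Q"
  unfolding dphi_def using dProk_le_sqrt_dFM_real[OF assms] integral_phip_diff_le[OF assms] by linarith

lemma dFM_real_eq_0_imp_eq:
  assumes "p \<ge> 1" "P \<in> M1 (phip p)" "Q \<in> M1 (phip p)" "dFM_real p P Q = 0"
  shows "P = Q"
proof -
  have cdf_le: "cdf P x \<le> cdf Q x"
    if "P \<in> M1 (phip p)" "Q \<in> M1 (phip p)" "dFM_real p P Q = 0" for P Q x
  proof -
    interpret Q: real_distribution Q using M1_real_distribution[OF that(2)] .
    have "\<forall>\<^sub>F y in at_right x. cdf P x \<le> cdf Q y"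
    proof (rule eventually_at_rightI[of x "x + 1"])
      fix y assume y: "y \<in> {x<..<x + 1}"
      have "cdf P x \<le> measure Q (nbhd {..x} (y - x))"
        using measure_le_nbhd_plus_dFM_real[OF assms(1) that(1,2), of "{..x}" "y - x"] y that(3)
        by (simp add: cdf_def)
      also have "\<dots> \<le> cdf Q y"
        unfolding cdf_def by (rule Q.finite_measure_mono) (auto simp: nbhd_def dist_real_def)
      finally show "cdf P x \<le> cdf Q y" .
    qed simp
    moreover have "(cdf Q \<longlongrightarrow> cdf Q x) (at_right x)"
      using Q.cdf_is_right_cont[of x] by (simp add: continuous_within)
    moreover have "at_right x \<noteq> bot"
      using trivial_limit_at_right_real[of x] by (simp add: trivial_limit_def)
    ultimately show ?thesis by (intro tendsto_lowerbound[of "cdf Q"])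
  qed
  have "cdf P = cdf Q"
    using cdf_le[OF assms(2-4)] cdf_le[OF assms(3,2)] assms(4) dFM_commute[of p P Q]
    by (auto intro: order.antisym)
  then show ?thesis using cdf_unique M1_real_distribution assms(2,3) by blast
qed

lemma Metric_space_M1_dFM_real:
  assumes "p \<ge> 1"
  shows "Metric_space (M1 (phip p)) (dFM_real p)"
proof
  fix P Q R
  show "0 \<le> dFM_real p P Q" using dFM_nonneg by (simp add: real_of_ereal_pos)
  show "dFM_real p P Q = dFM_real p Q P" by (simp add: dFM_commute)
  assume PQR: "P \<in> M1 (phip p)" "Q \<in> M1 (phip p)"
  show "dFM_real p P Q = 0 \<longleftrightarrow> P = Q"
    using dFM_real_eq_0_imp_eq[OF assms PQR] dFM_real_least[OF assms PQR(1,1), of 0]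
      dFM_nonneg[of p P P] by (auto simp: real_of_ereal_pos)
  assume R: "R \<in> M1 (phip p)"
  show "dFM_real p P R \<le> dFM_real p P Q + dFM_real p Q R"
  proof (rule dFM_real_least[OF assms PQR(1) R])
    fix \<psi> assume "\<psi> \<in> Fp p"
    then show "\<bar>(\<integral>x. \<psi> x \<partial>P) - (\<integral>x. \<psi> x \<partial>R)\<bar> \<le> dFM_real p P Q + dFM_real p Q R"
      using dFM_real_upper[OF assms PQR] dFM_real_upper[OF assms PQR(2) R] by fastforce
  qed
qed

section \<open>Tail weights\<close>

definition tail_weight :: "real \<Rightarrow> real \<Rightarrow> real \<Rightarrow> real" where
  "tail_weight p R t = max 0 (phip p t - R)"

lemma tail_weight_nonneg: "0 \<le> tail_weight p R t"
  unfolding tail_weight_def by simp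

lemma tail_weight_le_phip: "0 \<le> R \<Longrightarrow> tail_weight p R t \<le> phip p t"
  unfolding tail_weight_def using phip_nonneg[of p t] by simp

lemma tail_weight_continuous: "p \<ge> 1 \<Longrightarrow> continuous_on UNIV (tail_weight p R)"
  unfolding tail_weight_def[abs_def] by (intro continuous_intros phip_continuous)

lemma integrable_tail_weight:
  assumes "p \<ge> 1" "0 \<le> R" "M \<in> M1 (phip p)"
  shows "integrable M (tail_weight p R)"
  by (rule integrable_M1_phip[OF assms(1,3) tail_weight_continuous[OF assms(1)], where c=1])
    (use assms(2) tail_weight_nonneg tail_weight_le_phip in \<open>auto intro: add_increasing2\<close>)

lemma phip_plus_1_le_tail_weight:
  assumes "p \<ge> 1" "1 \<le> R" "2 * R \<le> \<bar>t\<bar>"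
  shows "phip p t + 1 \<le> 3 * tail_weight p R t"
proof -
  have "2 * R \<le> phip p t" using abs_le_phip[OF assms(1), of t] assms(3) by linarith
  then have "tail_weight p R t = phip p t - R" using assms(2) by (simp add: tail_weight_def)
  then show ?thesis using \<open>2 * R \<le> phip p t\<close> assms(2) by linarith
qed

lemma integral_tail_weight_le:
  assumes "p \<ge> 1" "P \<in> M1 (phip p)" "Q \<in> M1 (phip p)"
  shows "(\<integral>x. tail_weight p R x \<partial>Q) \<le> (\<integral>x. tail_weight p R x \<partial>P) + p * dFM_real p P Q"
proof -
  have "\<bar>tail_weight p R x - tail_weight p R y\<bar> \<le> p * cp p x y * \<bar>x - y\<bar>" for x y
    using phip_lipschitz[OF assms(1), of x y] unfolding tail_weight_def by (auto simp: abs_le_iff max_def)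
  then show ?thesis
    using integral_diff_le_dFM_real[OF assms, of p "tail_weight p R"] assms(1) by simp
qed

lemma integral_tail_weight_tendsto_0:
  assumes "p \<ge> 1" "P \<in> M1 (phip p)"
  shows "((\<lambda>R. \<integral>x. tail_weight p R x \<partial>P) \<longlongrightarrow> 0) at_top"
proof -
  have "((\<lambda>R. \<integral>x. tail_weight p R x \<partial>P) \<longlongrightarrow> (\<integral>x. 0 \<partial>P)) at_top"
  proof (rule integral_dominated_convergence_at_top[where w="phip p"])
    show "tail_weight p R \<in> borel_measurable P" for R
      by (rule continuous_measurable_M1[OF assms(2) tail_weight_continuous[OF assms(1)]])
    show "integrable P (phip p)" by (rule integrable_phip[OF assms])
    show "AE x in P. ((\<lambda>R. tail_weight p R x) \<longlongrightarrow> 0) at_top"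
    proof (rule AE_I2)
      fix x
      have "\<forall>\<^sub>F R in at_top. tail_weight p R x = 0"
        using eventually_ge_at_top[of "phip p x"] by eventually_elim (simp add: tail_weight_def)
      then show "((\<lambda>R. tail_weight p R x) \<longlongrightarrow> 0) at_top" by (rule tendsto_eventually)
    qed
    show "\<forall>\<^sub>F R in at_top. AE x in P. norm (tail_weight p R x) \<le> phip p x"
      using eventually_ge_at_top[of 0]
      by eventually_elim (simp add: tail_weight_nonneg tail_weight_le_phip)
  qed simp
  then show ?thesis by simp
qed

lemma small_tail_weight:
  assumes "p \<ge> 1" "P \<in> M1 (phip p)" "0 < \<delta>"
  obtains R where "1 \<le> R" "C * (\<integral>x. tail_weight p R x \<partial>P) < \<delta>"
proof -
  have "((\<lambda>R. C * (\<integral>x. tail_weight p R x \<partial>P)) \<longlongrightarrow> 0) at_top"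
    using tendsto_mult_right_zero[OF integral_tail_weight_tendsto_0[OF assms(1,2)]] .
  then have "\<forall>\<^sub>F R in at_top. C * (\<integral>x. tail_weight p R x \<partial>P) < \<delta>"
    using assms(3) by (rule order_tendstoD(2))
  then have "\<forall>\<^sub>F R in at_top. 1 \<le> R \<and> C * (\<integral>x. tail_weight p R x \<partial>P) < \<delta>"
    by (rule eventually_conj[OF eventually_ge_at_top])
  then obtain R0 where "\<And>R. R0 \<le> R \<Longrightarrow> 1 \<le> R \<and> C * (\<integral>x. tail_weight p R x \<partial>P) < \<delta>"
    unfolding eventually_at_top_linorder by blast
  then show ?thesis using that by blast
qed

section \<open>Interpolation by tent functions\<close>

definition grid_pt :: "real \<Rightarrow> real \<Rightarrow> nat \<Rightarrow> real" where
  "grid_pt a \<eta> j = a + real j * \<eta>"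

lemma symmetric_grid_exists:
  assumes "0 < R" "0 < \<eta>0"
  obtains N \<eta> where "0 < \<eta>" "\<eta> < \<eta>0" "-2 * R + real N * \<eta> = 2 * R"
proof -
  obtain N :: nat where N: "4 * R / \<eta>0 < real N" using reals_Archimedean2 by blast
  moreover have "0 < 4 * R / \<eta>0" using assms by simp
  ultimately have "0 < real N" by linarith
  show ?thesis
  proof (rule that[of "4 * R / real N" N])
    show "0 < 4 * R / real N" using assms \<open>0 < real N\<close> by simp
    show "4 * R / real N < \<eta>0" using N assms \<open>0 < real N\<close> by (simp add: field_simps)
    show "-2 * R + real N * (4 * R / real N) = 2 * R" using \<open>0 < real N\<close> by simp
  qed
qed

lemma grid_pt_bounds:
  assumes "0 < \<eta>" "j \<le> N"
  shows "a \<le> grid_pt a \<eta> j" "grid_pt a \<eta> j \<le> a + real N * \<eta>"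
  using assms by (auto simp: grid_pt_def intro: mult_right_mono)

definition ramp :: "real \<Rightarrow> real \<Rightarrow> nat \<Rightarrow> real \<Rightarrow> real" where
  "ramp a \<eta> j x = max 0 (min 1 ((x - grid_pt a \<eta> j) / \<eta> + 1))"

text \<open>The tent function of half-width \<open>\<eta>\<close> centred at \<open>grid_pt a \<eta> j\<close>, written as a difference
  of ramps so that its sums over \<open>j\<close> telescope.\<close>
definition hat :: "real \<Rightarrow> real \<Rightarrow> nat \<Rightarrow> real \<Rightarrow> real" where
  "hat a \<eta> j x = ramp a \<eta> j x - ramp a \<eta> (Suc j) x"

lemma ramp_bounds: "0 \<le> ramp a \<eta> j x" "ramp a \<eta> j x \<le> 1"
  unfolding ramp_def by auto

lemma ramp_Suc: "0 < \<eta> \<Longrightarrow> ramp a \<eta> (Suc j) x = max 0 (min 1 ((x - grid_pt a \<eta> j) / \<eta>))"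
  by (simp add: ramp_def grid_pt_def field_simps)

lemma ramp_Suc_le: "0 < \<eta> \<Longrightarrow> ramp a \<eta> (Suc j) x \<le> ramp a \<eta> j x"
  by (simp add: ramp_Suc) (simp add: ramp_def max_def min_def)

lemma hat_nonneg: "0 < \<eta> \<Longrightarrow> 0 \<le> hat a \<eta> j x"
  unfolding hat_def using ramp_Suc_le by simp

lemma hat_le_1: "hat a \<eta> j x \<le> 1"
  unfolding hat_def using ramp_bounds[of a \<eta> j x] ramp_bounds[of a \<eta> "Suc j" x] by linarith

lemma hat_eq_0:
  assumes "0 < \<eta>" "\<eta> \<le> \<bar>x - grid_pt a \<eta> j\<bar>"
  shows "hat a \<eta> j x = 0"
proof (cases "x \<le> grid_pt a \<eta> j")
  case True
  then have "(x - grid_pt a \<eta> j) / \<eta> \<le> -1" using assms by (simp add: divide_le_eq)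
  then show ?thesis using assms(1) by (simp add: hat_def ramp_Suc) (simp add: ramp_def)
next
  case False
  then have "1 \<le> (x - grid_pt a \<eta> j) / \<eta>" using assms by (simp add: le_divide_eq)
  then show ?thesis using assms(1) by (simp add: hat_def ramp_Suc) (simp add: ramp_def)
qed

lemma sum_hat: "(\<Sum>j\<le>N. hat a \<eta> j x) = ramp a \<eta> 0 x - ramp a \<eta> (Suc N) x"
  by (induction N) (simp_all add: hat_def)

lemma sum_hat_bounds:
  assumes "0 < \<eta>"
  shows "0 \<le> (\<Sum>j\<le>N. hat a \<eta> j x)" "(\<Sum>j\<le>N. hat a \<eta> j x) \<le> 1"
proof -
  show "0 \<le> (\<Sum>j\<le>N. hat a \<eta> j x)" using hat_nonneg[OF assms] by (simp add: sum_nonneg)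
  show "(\<Sum>j\<le>N. hat a \<eta> j x) \<le> 1"
    unfolding sum_hat using ramp_bounds[of a \<eta> 0 x] ramp_bounds[of a \<eta> "Suc N" x] by linarith
qed

lemma sum_hat_eq_1:
  assumes "0 < \<eta>" "a \<le> x" "x \<le> a + real N * \<eta>"
  shows "(\<Sum>j\<le>N. hat a \<eta> j x) = 1"
proof -
  have "(x - grid_pt a \<eta> N) / \<eta> \<le> 0" using assms by (simp add: grid_pt_def divide_le_0_iff)
  then show ?thesis using assms by (simp add: sum_hat ramp_Suc) (simp add: ramp_def grid_pt_def)
qed

lemma hat_lipschitz:
  assumes "0 < \<eta>"
  shows "\<bar>hat a \<eta> j x - hat a \<eta> j y\<bar> \<le> 2 / \<eta> * \<bar>x - y\<bar>"
proof -
  have ramp: "\<bar>ramp a \<eta> i x - ramp a \<eta> i y\<bar> \<le> \<bar>x - y\<bar> / \<eta>" for i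
  proof -
    have clamp: "\<bar>max 0 (min 1 u) - max 0 (min 1 v)\<bar> \<le> \<bar>u - v\<bar>" for u v :: real
      by (auto simp: max_def min_def abs_le_iff)
    have "\<bar>ramp a \<eta> i x - ramp a \<eta> i y\<bar>
        \<le> \<bar>((x - grid_pt a \<eta> i) / \<eta> + 1) - ((y - grid_pt a \<eta> i) / \<eta> + 1)\<bar>"
      unfolding ramp_def by (rule clamp)
    also have "\<dots> = \<bar>x - y\<bar> / \<eta>" using assms by (simp add: diff_divide_distrib[symmetric])
    finally show ?thesis .
  qed
  show ?thesis using ramp[of j] ramp[of "Suc j"] unfolding hat_def by simp
qed

lemma hat_continuous: "0 < \<eta> \<Longrightarrow> continuous_on UNIV (hat a \<eta> j)"
  unfolding hat_def[abs_def] ramp_def by (intro continuous_intros) auto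

lemma hat_interpolation_error:
  assumes "0 < \<eta>" "0 \<le> e"
    and near: "\<And>j. j \<le> N \<Longrightarrow> \<bar>x - grid_pt a \<eta> j\<bar> < \<eta> \<Longrightarrow> \<bar>g x - g (grid_pt a \<eta> j)\<bar> \<le> e"
  shows "\<bar>g x - (\<Sum>j\<le>N. g (grid_pt a \<eta> j) * hat a \<eta> j x)\<bar>
    \<le> e + (if a \<le> x \<and> x \<le> a + real N * \<eta> then 0 else \<bar>g x\<bar>)"
proof -
  define S where "S = (\<Sum>j\<le>N. hat a \<eta> j x)"
  have S: "0 \<le> S" "S \<le> 1" unfolding S_def by (rule sum_hat_bounds[OF assms(1)])+
  have "(\<Sum>j\<le>N. (g x - g (grid_pt a \<eta> j)) * hat a \<eta> j x)
      = g x * S - (\<Sum>j\<le>N. g (grid_pt a \<eta> j) * hat a \<eta> j x)"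
    by (simp add: S_def left_diff_distrib sum_subtractf sum_distrib_left)
  then have split: "g x - (\<Sum>j\<le>N. g (grid_pt a \<eta> j) * hat a \<eta> j x)
      = g x * (1 - S) + (\<Sum>j\<le>N. (g x - g (grid_pt a \<eta> j)) * hat a \<eta> j x)"
    by (simp add: algebra_simps)
  have outer: "\<bar>g x * (1 - S)\<bar> \<le> (if a \<le> x \<and> x \<le> a + real N * \<eta> then 0 else \<bar>g x\<bar>)"
  proof (cases "a \<le> x \<and> x \<le> a + real N * \<eta>")
    case True
    then show ?thesis using sum_hat_eq_1[OF assms(1)] by (simp add: S_def)
  next
    case False
    have "\<bar>g x * (1 - S)\<bar> = \<bar>g x\<bar> * (1 - S)" using S by (simp add: abs_mult)
    also have "\<dots> \<le> \<bar>g x\<bar>" using S by (intro mult_left_le) auto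
    finally show ?thesis by (simp only: if_not_P[OF False])
  qed
  have "\<bar>(g x - g (grid_pt a \<eta> j)) * hat a \<eta> j x\<bar> \<le> e * hat a \<eta> j x" if "j \<le> N" for j
  proof (cases "\<bar>x - grid_pt a \<eta> j\<bar> < \<eta>")
    case True
    then show ?thesis
      using near[OF that] hat_nonneg[OF assms(1)] by (simp add: abs_mult mult_right_mono)
  qed (use hat_eq_0[OF assms(1)] in simp)
  then have "\<bar>\<Sum>j\<le>N. (g x - g (grid_pt a \<eta> j)) * hat a \<eta> j x\<bar> \<le> e * S"
    unfolding S_def sum_distrib_left by (intro order_trans[OF sum_abs] sum_mono) simp
  also have "\<dots> \<le> e" using S assms(2) by (simp add: mult_left_le)
  finally show ?thesis using split outer by linarith
qed

lemma hat_interpolation_error_le_tail_weight: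
  assumes p: "p \<ge> 1" and \<eta>: "0 < \<eta>" and R: "1 \<le> R"
    and grid: "a \<le> -2 * R" "2 * R \<le> a + real N * \<eta>" and "0 \<le> e" "0 \<le> c"
    and g: "\<And>t. \<bar>g t\<bar> \<le> c * (phip p t + 1)"
    and near: "\<And>j x. j \<le> N \<Longrightarrow> \<bar>x - grid_pt a \<eta> j\<bar> < \<eta> \<Longrightarrow> \<bar>g x - g (grid_pt a \<eta> j)\<bar> \<le> e"
  shows "\<bar>g x - (\<Sum>j\<le>N. g (grid_pt a \<eta> j) * hat a \<eta> j x)\<bar> \<le> e + 3 * c * tail_weight p R x"
proof -
  have "(if a \<le> x \<and> x \<le> a + real N * \<eta> then 0 else \<bar>g x\<bar>) \<le> 3 * c * tail_weight p R x"
  proof (cases "a \<le> x \<and> x \<le> a + real N * \<eta>")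
    case False
    then have "2 * R \<le> \<bar>x\<bar>" using grid by auto
    then have "c * (phip p x + 1) \<le> c * (3 * tail_weight p R x)"
      by (intro mult_left_mono phip_plus_1_le_tail_weight[OF p R] \<open>0 \<le> c\<close>)
    moreover have "(if a \<le> x \<and> x \<le> a + real N * \<eta> then 0 else \<bar>g x\<bar>) = \<bar>g x\<bar>"
      using False by (rule if_not_P)
    ultimately show ?thesis using g[of x] by linarith
  qed (use \<open>0 \<le> c\<close> tail_weight_nonneg in simp)
  moreover have "\<bar>g x - (\<Sum>j\<le>N. g (grid_pt a \<eta> j) * hat a \<eta> j x)\<bar>
      \<le> e + (if a \<le> x \<and> x \<le> a + real N * \<eta> then 0 else \<bar>g x\<bar>)"
    by (rule hat_interpolation_error[OF \<eta> \<open>0 \<le> e\<close>]) (rule near)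
  ultimately show ?thesis by linarith
qed

lemma integral_hat_interpolation_error:
  assumes p: "p \<ge> 1" and M: "M \<in> M1 (phip p)" and \<eta>: "0 < \<eta>" and R: "1 \<le> R"
    and grid: "a \<le> -2 * R" "2 * R \<le> a + real N * \<eta>" and "0 \<le> e" "0 \<le> c"
    and g: "continuous_on UNIV g" "\<And>t. \<bar>g t\<bar> \<le> c * (phip p t + 1)"
    and near: "\<And>j x. j \<le> N \<Longrightarrow> \<bar>x - grid_pt a \<eta> j\<bar> < \<eta> \<Longrightarrow> \<bar>g x - g (grid_pt a \<eta> j)\<bar> \<le> e"
  shows "\<bar>(\<integral>x. g x \<partial>M) - (\<Sum>j\<le>N. g (grid_pt a \<eta> j) * (\<integral>x. hat a \<eta> j x \<partial>M))\<bar>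
    \<le> e + 3 * c * (\<integral>x. tail_weight p R x \<partial>M)"
proof -
  interpret prob_space M using M1D(1)[OF M] .
  define G where "G x = (\<Sum>j\<le>N. g (grid_pt a \<eta> j) * hat a \<eta> j x)" for x
  have "\<bar>hat a \<eta> j t\<bar> \<le> 1 * (phip p t + 1)" for j t
    using hat_nonneg[OF \<eta>, of a j t] hat_le_1[of a \<eta> j t] phip_nonneg[of p t] by simp
  then have hat_int: "integrable M (hat a \<eta> j)" for j
    by (rule integrable_M1_phip[OF p M hat_continuous[OF \<eta>]])
  have G_int: "integrable M G"
    unfolding G_def[abs_def] using hat_int by simp
  have G_eq: "(\<integral>x. G x \<partial>M) = (\<Sum>j\<le>N. g (grid_pt a \<eta> j) * (\<integral>x. hat a \<eta> j x \<partial>M))"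
    unfolding G_def[abs_def] using hat_int by simp
  have g_int: "integrable M g" by (rule integrable_M1_phip[OF p M g])
  have w_int: "integrable M (tail_weight p R)" using R by (intro integrable_tail_weight[OF p _ M]) simp
  have "\<bar>(\<integral>x. g x \<partial>M) - (\<integral>x. G x \<partial>M)\<bar> = \<bar>\<integral>x. g x - G x \<partial>M\<bar>"
    using g_int G_int by simp
  also have "\<dots> \<le> (\<integral>x. e + 3 * c * tail_weight p R x \<partial>M)"
  proof (rule integral_abs_bound_integral)
    show "integrable M (\<lambda>x. g x - G x)" using g_int G_int by simp
    show "integrable M (\<lambda>x. e + 3 * c * tail_weight p R x)" using w_int by simp
    fix x show "\<bar>g x - G x\<bar> \<le> e + 3 * c * tail_weight p R x"
      unfolding G_def
      by (rule hat_interpolation_error_le_tail_weight[OF p \<eta> R grid \<open>0 \<le> e\<close> \<open>0 \<le> c\<close> g(2) near])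
  qed
  also have "\<dots> = e + 3 * c * (\<integral>x. tail_weight p R x \<partial>M)"
    using w_int by (simp add: prob_space)
  finally show ?thesis unfolding G_eq .
qed

lemma integral_diff_le_hat_moments:
  assumes p: "p \<ge> 1" and PQ: "P \<in> M1 (phip p)" "Q \<in> M1 (phip p)" and \<eta>: "0 < \<eta>" and R: "1 \<le> R"
    and grid: "a \<le> -2 * R" "2 * R \<le> a + real N * \<eta>" and "0 \<le> e" "0 \<le> c"
    and g: "continuous_on UNIV g" "\<And>t. \<bar>g t\<bar> \<le> c * (phip p t + 1)"
    and near: "\<And>j x. j \<le> N \<Longrightarrow> \<bar>x - grid_pt a \<eta> j\<bar> < \<eta> \<Longrightarrow> \<bar>g x - g (grid_pt a \<eta> j)\<bar> \<le> e"
  shows "\<bar>(\<integral>x. g x \<partial>P) - (\<integral>x. g x \<partial>Q)\<bar>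
    \<le> 2 * e + 3 * c * ((\<integral>x. tail_weight p R x \<partial>P) + (\<integral>x. tail_weight p R x \<partial>Q))
      + (\<Sum>j\<le>N. \<bar>g (grid_pt a \<eta> j)\<bar> * \<bar>(\<integral>x. hat a \<eta> j x \<partial>P) - (\<integral>x. hat a \<eta> j x \<partial>Q)\<bar>)"
proof -
  have "\<bar>(\<Sum>j\<le>N. g (grid_pt a \<eta> j) * (\<integral>x. hat a \<eta> j x \<partial>P))
      - (\<Sum>j\<le>N. g (grid_pt a \<eta> j) * (\<integral>x. hat a \<eta> j x \<partial>Q))\<bar>
    \<le> (\<Sum>j\<le>N. \<bar>g (grid_pt a \<eta> j)\<bar> * \<bar>(\<integral>x. hat a \<eta> j x \<partial>P) - (\<integral>x. hat a \<eta> j x \<partial>Q)\<bar>)"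
    unfolding sum_subtractf[symmetric] right_diff_distrib[symmetric]
    by (rule order_trans[OF sum_abs]) (simp add: abs_mult)
  moreover have "3 * c * ((\<integral>x. tail_weight p R x \<partial>P) + (\<integral>x. tail_weight p R x \<partial>Q))
      = 3 * c * (\<integral>x. tail_weight p R x \<partial>P) + 3 * c * (\<integral>x. tail_weight p R x \<partial>Q)"
    by (rule distrib_left)
  ultimately show ?thesis
    using integral_hat_interpolation_error[OF p PQ(1) \<eta> R grid \<open>0 \<le> e\<close> \<open>0 \<le> c\<close> g near]
      integral_hat_interpolation_error[OF p PQ(2) \<eta> R grid \<open>0 \<le> e\<close> \<open>0 \<le> c\<close> g near]
    by linarith
qed

lemma integral_diff_le_tail_weight_dFM_real:
  assumes p: "p \<ge> 1" and PQ: "P \<in> M1 (phip p)" "Q \<in> M1 (phip p)" and \<eta>: "0 < \<eta>" and R: "1 \<le> R"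
    and grid: "a \<le> -2 * R" "2 * R \<le> a + real N * \<eta>" and "0 \<le> e" "0 \<le> c"
    and g: "continuous_on UNIV g" "\<And>t. \<bar>g t\<bar> \<le> c * (phip p t + 1)"
    and near: "\<And>j x. j \<le> N \<Longrightarrow> \<bar>x - grid_pt a \<eta> j\<bar> < \<eta> \<Longrightarrow> \<bar>g x - g (grid_pt a \<eta> j)\<bar> \<le> e"
  shows "\<bar>(\<integral>x. g x \<partial>P) - (\<integral>x. g x \<partial>Q)\<bar>
    \<le> 2 * e + 3 * c * (2 * (\<integral>x. tail_weight p R x \<partial>P) + p * dFM_real p P Q)
      + 2 / \<eta> * (\<Sum>j\<le>N. \<bar>g (grid_pt a \<eta> j)\<bar>) * dFM_real p P Q"
proof -
  define D where "D = dFM_real p P Q"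
  have "(\<Sum>j\<le>N. \<bar>g (grid_pt a \<eta> j)\<bar> * \<bar>(\<integral>x. hat a \<eta> j x \<partial>P) - (\<integral>x. hat a \<eta> j x \<partial>Q)\<bar>)
      \<le> (\<Sum>j\<le>N. \<bar>g (grid_pt a \<eta> j)\<bar> * (2 / \<eta> * D))"
    using lipschitz_integral_diff_le_dFM_real[OF p PQ _ hat_lipschitz[OF \<eta>]] \<eta>
    by (intro sum_mono mult_left_mono) (auto simp: D_def)
  also have "\<dots> = 2 / \<eta> * (\<Sum>j\<le>N. \<bar>g (grid_pt a \<eta> j)\<bar>) * D"
    unfolding sum_distrib_right[symmetric] by (simp add: mult_ac)
  finally have hats: "(\<Sum>j\<le>N. \<bar>g (grid_pt a \<eta> j)\<bar> * \<bar>(\<integral>x. hat a \<eta> j x \<partial>P) - (\<integral>x. hat a \<eta> j x \<partial>Q)\<bar>)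
      \<le> 2 / \<eta> * (\<Sum>j\<le>N. \<bar>g (grid_pt a \<eta> j)\<bar>) * D" .
  have "3 * c * ((\<integral>x. tail_weight p R x \<partial>P) + (\<integral>x. tail_weight p R x \<partial>Q))
      \<le> 3 * c * (2 * (\<integral>x. tail_weight p R x \<partial>P) + p * D)"
    using integral_tail_weight_le[OF p PQ, of R] \<open>0 \<le> c\<close> by (intro mult_left_mono) (auto simp: D_def)
  then show ?thesis
    using integral_diff_le_hat_moments[OF p PQ \<eta> R grid \<open>0 \<le> e\<close> \<open>0 \<le> c\<close> g near] hats
    unfolding D_def by linarith
qed

lemma dFM_real_le_tail_weight_hat_moments:
  assumes p: "p \<ge> 1" and PQ: "P \<in> M1 (phip p)" "Q \<in> M1 (phip p)"
    and \<eta>: "0 < \<eta>" "\<eta> \<le> 1" and R: "1 \<le> R" and grid: "-2 * R + real N * \<eta> = 2 * R"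
    and osc: "(2 * R + 1) powr (p - 1) * \<eta> \<le> e"
    and hats: "\<And>j. j \<le> N \<Longrightarrow>
      \<bar>(\<integral>x. hat (-2 * R) \<eta> j x \<partial>P) - (\<integral>x. hat (-2 * R) \<eta> j x \<partial>Q)\<bar> \<le> \<delta>"
  shows "dFM_real p P Q \<le> 2 * e + 3 * ((\<integral>x. tail_weight p R x \<partial>P) + (\<integral>x. tail_weight p R x \<partial>Q))
    + (\<Sum>j\<le>N. phip p (grid_pt (-2 * R) \<eta> j)) * \<delta>"
proof (rule dFM_real_least[OF p PQ])
  fix \<psi> assume \<psi>: "\<psi> \<in> Fp p"
  define a where "a = -2 * R"
  define g where "g x = \<psi> x - \<psi> 0" for x
  have g_bound: "\<bar>g t\<bar> \<le> 1 * (phip p t + 1)" for t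
    using Fp_abs_sub_le_phip[OF p \<psi>, of t] by (simp add: g_def)
  have "0 \<le> (2 * R + 1) powr (p - 1) * \<eta>" using \<eta>(1) by simp
  then have "0 \<le> e" using osc by linarith
  have near: "\<bar>g x - g (grid_pt a \<eta> j)\<bar> \<le> e" if "j \<le> N" "\<bar>x - grid_pt a \<eta> j\<bar> < \<eta>" for j x
  proof -
    have "x \<in> cball 0 (2 * R + 1)" "grid_pt a \<eta> j \<in> cball 0 (2 * R + 1)"
      using grid_pt_bounds[OF \<eta>(1) \<open>j \<le> N\<close>, of a] that \<eta> grid by (auto simp: a_def)
    then have "\<bar>\<psi> x - \<psi> (grid_pt a \<eta> j)\<bar> \<le> (2 * R + 1) powr (p - 1) * \<bar>x - grid_pt a \<eta> j\<bar>"
      using lipschitz_onD[OF Fp_lipschitz_on_cball[OF p _ \<psi>]] R by (force simp: dist_real_def)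
    also have "\<dots> \<le> (2 * R + 1) powr (p - 1) * \<eta>"
      using that(2) by (intro mult_left_mono) auto
    finally show ?thesis using osc by (simp add: g_def)
  qed
  have "(\<Sum>j\<le>N. \<bar>g (grid_pt a \<eta> j)\<bar> * \<bar>(\<integral>x. hat a \<eta> j x \<partial>P) - (\<integral>x. hat a \<eta> j x \<partial>Q)\<bar>)
      \<le> (\<Sum>j\<le>N. phip p (grid_pt a \<eta> j)) * \<delta>"
    unfolding sum_distrib_right using hats Fp_abs_sub_le_phip[OF p \<psi>]
    by (intro sum_mono mult_mono) (auto simp: a_def g_def phip_nonneg)
  moreover have "(\<integral>x. g x \<partial>M) = (\<integral>x. \<psi> x \<partial>M) - \<psi> 0" if "M \<in> M1 (phip p)" for M
    unfolding g_def by (rule integral_diff_const_M1[OF that Fp_integrable[OF p that \<psi>]])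
  moreover have "\<bar>(\<integral>x. g x \<partial>P) - (\<integral>x. g x \<partial>Q)\<bar> \<le> 2 * e + 3 * 1 * ((\<integral>x. tail_weight p R x \<partial>P)
      + (\<integral>x. tail_weight p R x \<partial>Q))
      + (\<Sum>j\<le>N. \<bar>g (grid_pt a \<eta> j)\<bar> * \<bar>(\<integral>x. hat a \<eta> j x \<partial>P) - (\<integral>x. hat a \<eta> j x \<partial>Q)\<bar>)"
    using grid
    by (intro integral_diff_le_hat_moments[OF p PQ \<eta>(1) R _ _ \<open>0 \<le> e\<close> zero_le_one _ g_bound near])
      (auto simp: a_def g_def intro: continuous_intros Fp_continuous[OF p \<psi>])
  ultimately show "\<bar>(\<integral>x. \<psi> x \<partial>P) - (\<integral>x. \<psi> x \<partial>Q)\<bar> \<le> 2 * e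
      + 3 * ((\<integral>x. tail_weight p R x \<partial>P) + (\<integral>x. tail_weight p R x \<partial>Q))
      + (\<Sum>j\<le>N. phip p (grid_pt (-2 * R) \<eta> j)) * \<delta>"
    using PQ by (simp add: a_def)
qed

section \<open>The phi-weak topology\<close>

lemma integral_continuous_dFM_real:
  assumes p: "p \<ge> 1" and P: "P \<in> M1 (phip p)" and h: "continuous_on UNIV h"
    and "0 \<le> c" "\<And>t. \<bar>h t\<bar> \<le> c * (phip p t + 1)" and "0 < \<epsilon>"
  obtains r where "0 < r"
    "\<And>Q. Q \<in> M1 (phip p) \<Longrightarrow> dFM_real p P Q < r \<Longrightarrow> \<bar>(\<integral>x. h x \<partial>P) - (\<integral>x. h x \<partial>Q)\<bar> < \<epsilon>"
proof -
  define \<delta> where "\<delta> = \<epsilon> / 5"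
  have "0 < \<delta>" using \<open>0 < \<epsilon>\<close> by (simp add: \<delta>_def)
  obtain R where R: "1 \<le> R" "3 * c * (\<integral>x. tail_weight p R x \<partial>P) < \<delta>"
    using small_tail_weight[OF p P \<open>0 < \<delta>\<close>] by blast
  have "uniformly_continuous_on (cball 0 (2 * R + 1)) h"
    by (rule compact_uniformly_continuous[OF continuous_on_subset[OF h]]) auto
  then obtain d where "0 < d"
    and d: "\<And>x y. x \<in> cball 0 (2 * R + 1) \<Longrightarrow> y \<in> cball 0 (2 * R + 1) \<Longrightarrow> dist y x < d
      \<Longrightarrow> dist (h y) (h x) < \<delta>"
    using uniformly_continuous_onE[OF _ \<open>0 < \<delta>\<close>] by metis
  have "0 < R" "0 < min 1 d" using R(1) \<open>0 < d\<close> by auto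
  then obtain N \<eta> where \<eta>: "0 < \<eta>" "\<eta> < min 1 d" and grid: "-2 * R + real N * \<eta> = 2 * R"
    by (rule symmetric_grid_exists)
  define a where "a = -2 * R"
  have grid_a: "a \<le> -2 * R" "2 * R \<le> a + real N * \<eta>" using grid by (auto simp: a_def)
  have near: "\<bar>h x - h (grid_pt a \<eta> j)\<bar> \<le> \<delta>" if "j \<le> N" "\<bar>x - grid_pt a \<eta> j\<bar> < \<eta>" for j x
    using d[of "grid_pt a \<eta> j" x] grid_pt_bounds[OF \<eta>(1) \<open>j \<le> N\<close>, of a] that \<eta> grid
    by (force simp: a_def dist_real_def)
  define L where "L = 3 * c * p + 2 / \<eta> * (\<Sum>j\<le>N. \<bar>h (grid_pt a \<eta> j)\<bar>)"
  have "0 \<le> L" using \<eta> \<open>0 \<le> c\<close> p by (simp add: L_def sum_nonneg)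
  show ?thesis
  proof (rule that[of "\<delta> / (L + 1)"])
    show "0 < \<delta> / (L + 1)" using \<open>0 < \<delta>\<close> \<open>0 \<le> L\<close> by simp
    fix Q assume Q: "Q \<in> M1 (phip p)" and "dFM_real p P Q < \<delta> / (L + 1)"
    then have "L * dFM_real p P Q \<le> L * (\<delta> / (L + 1))"
      by (intro mult_left_mono \<open>0 \<le> L\<close>) simp
    also have "\<dots> < \<delta>" using \<open>0 < \<delta>\<close> \<open>0 \<le> L\<close> by (simp add: field_simps)
    finally have "L * dFM_real p P Q < \<delta>" .
    moreover have "\<bar>(\<integral>x. h x \<partial>P) - (\<integral>x. h x \<partial>Q)\<bar>
        \<le> 2 * \<delta> + 2 * (3 * c * (\<integral>x. tail_weight p R x \<partial>P)) + L * dFM_real p P Q"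
      using integral_diff_le_tail_weight_dFM_real[OF p P Q \<eta>(1) R(1) grid_a
          less_imp_le[OF \<open>0 < \<delta>\<close>] \<open>0 \<le> c\<close> h assms(5) near]
      by (simp add: L_def algebra_simps)
    ultimately show "\<bar>(\<integral>x. h x \<partial>P) - (\<integral>x. h x \<partial>Q)\<bar> < \<epsilon>"
      using R(2) unfolding \<delta>_def by linarith
  qed
qed

lemma phi_weak_openin_basic:
  assumes "continuous_on UNIV h" "0 < c" "\<And>t. \<bar>h t\<bar> \<le> c * (\<phi> t + 1)" "open V"
  shows "openin (phi_weak_topology \<phi>) {Q \<in> M1 \<phi>. (\<integral>x. h x \<partial>Q) \<in> V}"
  unfolding phi_weak_topology_def by (rule topology_generated_by_Basis) (use assms in blast)

lemma phi_weak_openin_tail_weight: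
  assumes "p \<ge> 1" "0 \<le> R" "open V"
  shows "openin (phi_weak_topology (phip p)) {Q \<in> M1 (phip p). (\<integral>x. tail_weight p R x \<partial>Q) \<in> V}"
  using assms tail_weight_nonneg tail_weight_le_phip
  by (intro phi_weak_openin_basic[OF tail_weight_continuous, where c=1]) (auto intro: add_increasing2)

lemma phi_weak_openin_hat:
  assumes "0 < \<eta>" "open V"
  shows "openin (phi_weak_topology (phip p)) {Q \<in> M1 (phip p). (\<integral>x. hat a \<eta> j x \<partial>Q) \<in> V}"
  using assms hat_nonneg[OF assms(1)] hat_le_1 phip_nonneg
  by (intro phi_weak_openin_basic[OF hat_continuous, where c=1]) (auto intro: add_increasing)

lemma phi_weak_nbhd_in_dFM_real_ball:
  assumes p: "p \<ge> 1" and P: "P \<in> M1 (phip p)" and "0 < \<epsilon>"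
  obtains U where "openin (phi_weak_topology (phip p)) U" "P \<in> U"
    "\<And>Q. Q \<in> U \<Longrightarrow> Q \<in> M1 (phip p) \<and> dFM_real p P Q < \<epsilon>"
proof -
  define \<delta> where "\<delta> = \<epsilon> / 6"
  have "0 < \<delta>" using \<open>0 < \<epsilon>\<close> by (simp add: \<delta>_def)
  obtain R where R: "1 \<le> R" "3 * (\<integral>x. tail_weight p R x \<partial>P) < \<delta>"
    using small_tail_weight[OF p P \<open>0 < \<delta>\<close>] by blast
  define B where "B = (2 * R + 1) powr (p - 1)"
  have "1 \<le> B" unfolding B_def using R(1) p by (intro ge_one_powr_ge_zero) auto
  have "0 < R" "0 < min 1 (\<delta> / B)" using R(1) \<open>0 < \<delta>\<close> \<open>1 \<le> B\<close> by auto
  then obtain N \<eta> where \<eta>: "0 < \<eta>" "\<eta> < min 1 (\<delta> / B)" and grid: "-2 * R + real N * \<eta> = 2 * R"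
    by (rule symmetric_grid_exists)
  have osc: "B * \<eta> \<le> \<delta>" using \<eta>(2) \<open>1 \<le> B\<close> by (simp add: field_simps)
  define K where "K = (\<Sum>j\<le>N. phip p (grid_pt (-2 * R) \<eta> j))"
  define \<delta>1 where "\<delta>1 = \<delta> / (K + 1)"
  have "0 \<le> K" unfolding K_def by (intro sum_nonneg phip_nonneg)
  then have "0 < \<delta>1" "K * \<delta>1 \<le> \<delta>" using \<open>0 < \<delta>\<close> by (auto simp: \<delta>1_def field_simps)
  define U0 where "U0 = {Q \<in> M1 (phip p). (\<integral>x. tail_weight p R x \<partial>Q) \<in> {..< \<delta> / 3}}"
  define Uh where "Uh j = {Q \<in> M1 (phip p).
    (\<integral>x. hat (-2 * R) \<eta> j x \<partial>Q) \<in> ball (\<integral>x. hat (-2 * R) \<eta> j x \<partial>P) \<delta>1}" for j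
  show ?thesis
  proof (rule that[of "U0 \<inter> (\<Inter>j\<le>N. Uh j)"])
    show "openin (phi_weak_topology (phip p)) (U0 \<inter> (\<Inter>j\<le>N. Uh j))"
      unfolding U0_def Uh_def using p R(1) \<eta>(1)
      by (intro openin_Int openin_INT2 phi_weak_openin_tail_weight phi_weak_openin_hat) auto
    show "P \<in> U0 \<inter> (\<Inter>j\<le>N. Uh j)"
      using P R(2) \<open>0 < \<delta>1\<close> by (simp add: U0_def Uh_def)
    fix Q assume Q: "Q \<in> U0 \<inter> (\<Inter>j\<le>N. Uh j)"
    then have "Q \<in> M1 (phip p)" by (simp add: U0_def)
    have "\<bar>(\<integral>x. hat (-2 * R) \<eta> j x \<partial>P) - (\<integral>x. hat (-2 * R) \<eta> j x \<partial>Q)\<bar> \<le> \<delta>1" if "j \<le> N" for j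
    proof -
      have "Q \<in> Uh j" using Q that by blast
      then show ?thesis by (auto simp: Uh_def dist_real_def abs_minus_commute)
    qed
    then have "dFM_real p P Q \<le> 2 * \<delta> + 3 * ((\<integral>x. tail_weight p R x \<partial>P) + (\<integral>x. tail_weight p R x \<partial>Q))
        + K * \<delta>1"
      unfolding K_def using osc \<eta> unfolding B_def
      by (intro dFM_real_le_tail_weight_hat_moments[OF p P \<open>Q \<in> M1 (phip p)\<close> _ _ R(1) grid]) auto
    then show "Q \<in> M1 (phip p) \<and> dFM_real p P Q < \<epsilon>"
      using \<open>Q \<in> M1 (phip p)\<close> Q R(2) \<open>K * \<delta>1 \<le> \<delta>\<close> \<open>0 < \<epsilon>\<close> by (simp add: U0_def \<delta>_def)
  qed
qed

lemma openin_mtopology_integral_preimage: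
  assumes p: "p \<ge> 1" and h: "continuous_on UNIV h" "0 \<le> c" "\<And>t. \<bar>h t\<bar> \<le> c * (phip p t + 1)"
    and "open V"
  shows "openin (Metric_space.mtopology (M1 (phip p)) (dFM_real p)) {Q \<in> M1 (phip p). (\<integral>x. h x \<partial>Q) \<in> V}"
proof -
  interpret Metric_space "M1 (phip p)" "dFM_real p" by (rule Metric_space_M1_dFM_real[OF p])
  show ?thesis
    unfolding openin_mtopology
  proof (intro conjI allI impI)
    fix P assume "P \<in> {Q \<in> M1 (phip p). (\<integral>x. h x \<partial>Q) \<in> V}"
    then have P: "P \<in> M1 (phip p)" and "(\<integral>x. h x \<partial>P) \<in> V" by auto
    then obtain \<epsilon> where "0 < \<epsilon>" and \<epsilon>: "ball (\<integral>x. h x \<partial>P) \<epsilon> \<subseteq> V"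
      using \<open>open V\<close> open_contains_ball by blast
    obtain r where "0 < r"
      and r: "\<And>Q. Q \<in> M1 (phip p) \<Longrightarrow> dFM_real p P Q < r \<Longrightarrow> \<bar>(\<integral>x. h x \<partial>P) - (\<integral>x. h x \<partial>Q)\<bar> < \<epsilon>"
      using integral_continuous_dFM_real[OF p P h \<open>0 < \<epsilon>\<close>] by blast
    have "mball P r \<subseteq> {Q \<in> M1 (phip p). (\<integral>x. h x \<partial>Q) \<in> V}"
      using r \<epsilon> by (auto simp: dist_real_def)
    then show "\<exists>r>0. mball P r \<subseteq> {Q \<in> M1 (phip p). (\<integral>x. h x \<partial>Q) \<in> V}"
      using \<open>0 < r\<close> by blast
  qed auto
qed

lemma openin_phi_weak_imp_openin_mtopology:
  assumes p: "p \<ge> 1" and "openin (phi_weak_topology (phip p)) S"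
  shows "openin (Metric_space.mtopology (M1 (phip p)) (dFM_real p)) S"
proof -
  have "generate_topology_on {{Q \<in> M1 (phip p). (\<integral>x. h x \<partial>Q) \<in> V} | h V.
      continuous_on UNIV h \<and> (\<exists>c>0. \<forall>t. \<bar>h t\<bar> \<le> c * (phip p t + 1)) \<and> open V} S"
    using assms(2) unfolding phi_weak_topology_def by (rule openin_topology_generated_by)
  then show ?thesis
  proof induct
    case Empty
    then show ?case by simp
  next
    case (Int S T)
    then show ?case by (intro openin_Int) auto
  next
    case (UN K)
    then show ?case by (intro openin_Union) auto
  next
    case (Basis S)
    then obtain h V c where S: "S = {Q \<in> M1 (phip p). (\<integral>x. h x \<partial>Q) \<in> V}"
      and h: "continuous_on UNIV h" "0 < c" "\<And>t. \<bar>h t\<bar> \<le> c * (phip p t + 1)" and "open V"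
      by blast
    show ?case
      unfolding S by (rule openin_mtopology_integral_preimage[OF p h(1) less_imp_le[OF h(2)] h(3) \<open>open V\<close>])
  qed
qed

lemma openin_mtopology_imp_openin_phi_weak:
  assumes p: "p \<ge> 1" and S: "openin (Metric_space.mtopology (M1 (phip p)) (dFM_real p)) S"
  shows "openin (phi_weak_topology (phip p)) S"
proof -
  interpret Metric_space "M1 (phip p)" "dFM_real p" by (rule Metric_space_M1_dFM_real[OF p])
  show ?thesis
  proof (subst openin_subopen, intro ballI)
    fix P assume "P \<in> S"
    then obtain r where "0 < r" "mball P r \<subseteq> S"
      using S unfolding openin_mtopology by blast
    have P: "P \<in> M1 (phip p)" using S \<open>P \<in> S\<close> unfolding openin_mtopology by blast
    obtain U where U: "openin (phi_weak_topology (phip p)) U" "P \<in> U"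
      "\<And>Q. Q \<in> U \<Longrightarrow> Q \<in> M1 (phip p) \<and> dFM_real p P Q < r"
      by (rule phi_weak_nbhd_in_dFM_real_ball[OF p P \<open>0 < r\<close>]) blast
    have "U \<subseteq> mball P r" using U(3) P by auto
    then show "\<exists>U. openin (phi_weak_topology (phip p)) U \<and> P \<in> U \<and> U \<subseteq> S"
      using U(1,2) \<open>mball P r \<subseteq> S\<close> by blast
  qed
qed

lemma mtopology_dFM_real_eq_phi_weak_topology:
  "p \<ge> 1 \<Longrightarrow> Metric_space.mtopology (M1 (phip p)) (dFM_real p) = phi_weak_topology (phip p)"
  unfolding topology_eq
  using openin_phi_weak_imp_openin_mtopology openin_mtopology_imp_openin_phi_weak by blast

theorem proposition2:
  fixes p :: real
  assumes "p \<ge> 1"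
  shows "(Pp p = M1 (phip p) \<and> M1 (phip p) = M1 (\<lambda>t. \<bar>t\<bar> powr p))
    \<and> (\<forall>P\<in>Pp p. \<forall>Q\<in>Pp p.
           dFM p P Q < \<infinity> \<and>
           dphi (phip p) P Q \<le> sqrt (real_of_ereal (dFM p P Q)) + p * real_of_ereal (dFM p P Q))
    \<and> (Metric_space (Pp p) (\<lambda>P Q. real_of_ereal (dFM p P Q)) \<and>
         Metric_space.mtopology (Pp p) (\<lambda>P Q. real_of_ereal (dFM p P Q))
           = phi_weak_topology (phip p))"
  unfolding Pp_eq_M1[OF assms]
proof (intro conjI ballI)
  fix P Q assume "P \<in> M1 (phip p)" "Q \<in> M1 (phip p)"
  then show "dFM p P Q < \<infinity>" "dphi (phip p) P Q \<le> sqrt (dFM_real p P Q) + p * dFM_real p P Q"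
    by (rule dFM_M1_less_infinity[OF assms] dphi_phip_le[OF assms])+
qed (rule refl M1_phip_eq_M1_powr[OF assms] Metric_space_M1_dFM_real[OF assms]
      mtopology_dFM_real_eq_phi_weak_topology[OF assms])+

end
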